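(* In the setting of the context, for every $k\in\{0,\dots,K-1\}$ and every fixed sequence of previously observed feature values $f_1,\dots,f_k$, the function $\varpi\mapsto\mathcal{A}_k(\varpi; f_1,\dots,f_k)$ on the probability simplex is concave, continuous, and piecewise linear.
   Context: There are $L$ classes $c_1,\dots,c_L$ with class variable $\mathcal{C}$, and features $F_1,\dots,F_K$ with finitely many values, jointly distributed with $\mathcal{C}$. Let $e_k>0$ be feature evaluation costs, $Q_{ij}\geqslant 0$ misclassification costs, $Q_j=[Q_{1j},\dots,Q_{Lj}]^T$, and on the simplex $\Sigma=\{\varpi\in[0,1]^L:\sum_i\omega_i=1\}$ let $g(\varpi)=\min_{1\leqslant j\leqslant L}Q_j^T\varpi$. Let $\Delta(f_{k+1}\mid f_1,\dots,f_k)=[P(F_{k+1}=f_{k+1}\mid F_1=f_1,\dots,F_k=f_k,\mathcal{C}=c_i)]_{i=1}^L$ (a column vector with nonnegative entries). Define recursively $\bar{J}_K(\varpi;f_1,\dots,f_K)=g(\varpi)$ and, for $k=K-1,\dots,0$, $$\mathcal{A}_k(\varpi;f_1,\dots,f_k)=e_{k+1}+\sum_{f_{k+1}}\Delta^T(f_{k+1}\mid f_1,\dots,f_k)\varpi\;\bar{J}_{k+1}\!\left(\frac{\operatorname{diag}(\Delta(f_{k+1}\mid f_1,\dots,f_k))\varpi}{\Delta^T(f_{k+1}\mid f_1,\dots,f_k)\varpi};f_1,\dots,f_{k+1}\right),$$ $$\bar{J}_k(\varpi;f_1,\dots,f_k)=\min\big[g(\varpi),\mathcal{A}_k(\varpi;f_1,\dots,f_k)\big],$$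 where the sum is over the possible values of $F_{k+1}$ and a summand whose factor $\Delta^T\varpi$ equals $0$ is taken to be $0$. *)

theory Defs
  imports "HOL-Analysis.Analysis" "HOL-Probability.Probability"
begin

text \<open>Classes are the elements of a finite type 'c (so L = CARD('c)); a belief vector
  \<open>\<varpi>\<close> is an element of real^'c. A sample of the joint distribution is a pair
  (class, feature list) where the feature list has length K; feature F_(j+1) is the
  list entry at index j.\<close>

definition prob_simplex :: "(real ^ 'c::finite) set" where
  "prob_simplex = {w. (\<forall>i. 0 \<le> w $ i) \<and> (\<Sum>i\<in>UNIV. w $ i) = 1}"

definition gcost :: "('c::finite \<Rightarrow> 'c \<Rightarrow> real) \<Rightarrow> real ^ 'c \<Rightarrow> real" where
  "gcost Q w = Min (range (\<lambda>j. \<Sum>i\<in>UNIV. Q i j * w $ i))"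

text \<open>Delta(f | f_1..f_k): conditional probabilities P(F_(k+1) = f | F_1..F_k = fs, C = i),
  with the convention x/0 = 0 when the conditioning event is null.\<close>
definition Delta :: "('c::finite \<times> 'v list) pmf \<Rightarrow> 'v list \<Rightarrow> 'v \<Rightarrow> real ^ 'c" where
  "Delta P fs f = (\<chi> i.
     measure_pmf.prob P {(c, x). c = i \<and> take (Suc (length fs)) x = fs @ [f]}
     / measure_pmf.prob P {(c, x). c = i \<and> take (length fs) x = fs})"

definition Aop :: "('c::finite \<times> 'v::finite list) pmf \<Rightarrow> (nat \<Rightarrow> real)
    \<Rightarrow> ('v list \<Rightarrow> real ^ 'c \<Rightarrow> real) \<Rightarrow> 'v list \<Rightarrow> real ^ 'c \<Rightarrow> real" where
  "Aop P e J fs w = e (Suc (length fs)) +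
     (\<Sum>f\<in>UNIV. (let d = Delta P fs f; s = d \<bullet> w in
        if s = 0 then 0 else s * J (fs @ [f]) (\<chi> i. d $ i * w $ i / s)))"

text \<open>Jrem m fs w = Jbar_k(w; fs) where m = K - k is the number of features not yet seen.\<close>
fun Jrem :: "('c::finite \<times> 'v::finite list) pmf \<Rightarrow> (nat \<Rightarrow> real) \<Rightarrow> ('c \<Rightarrow> 'c \<Rightarrow> real)
    \<Rightarrow> nat \<Rightarrow> 'v list \<Rightarrow> real ^ 'c \<Rightarrow> real" where
  "Jrem P e Q 0 fs w = gcost Q w"
| "Jrem P e Q (Suc m) fs w = min (gcost Q w) (Aop P e (Jrem P e Q m) fs w)"

definition Ak :: "('c::finite \<times> 'v::finite list) pmf \<Rightarrow> (nat \<Rightarrow> real) \<Rightarrow> ('c \<Rightarrow> 'c \<Rightarrow> real)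
    \<Rightarrow> nat \<Rightarrow> 'v list \<Rightarrow> real ^ 'c \<Rightarrow> real" where
  "Ak P e Q K fs w = Aop P e (Jrem P e Q (K - Suc (length fs))) fs w"

definition piecewise_linear_on :: "('a::euclidean_space) set \<Rightarrow> ('a \<Rightarrow> real) \<Rightarrow> bool" where
  "piecewise_linear_on S f \<longleftrightarrow>
     (\<exists>F. finite F \<and> \<Union>F = S \<and>
        (\<forall>C\<in>F. polyhedron C \<and> (\<exists>a b. \<forall>x\<in>C. f x = a \<bullet> x + b)))"

end

theory Submission
  imports Defs
begin

text \<open>Every function occurring in the recursion is, on the simplex, the minimum of finitely
  many linear functionals \<open>w \<mapsto> v \<bullet> w\<close>. For g this is its definition, and a constant c
  is \<open>(\<chi> i. c) \<bullet> w\<close> on the simplex. The class is closed under minima and sums (the sum of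
  two minima is the minimum over the Minkowski sum of the index sets) and under the
  perspective step of the operator A: if \<open>J p = min\<^sub>v v \<bullet> p\<close> then
  \<open>(d \<bullet> w) J(diag(d) w / d \<bullet> w) = min\<^sub>v (v \<bullet> diag(d) w)\<close>, which is again linear in w. A minimum
  of finitely many linear functions is concave and continuous, and it is affine on each of
  the finitely many polyhedra where a fixed one of them attains the minimum.\<close>

definition min_of_linear_on :: "'a::real_inner set \<Rightarrow> ('a \<Rightarrow> real) \<Rightarrow> bool" where
  "min_of_linear_on S f \<longleftrightarrow>
     (\<exists>V. finite V \<and> V \<noteq> {} \<and> (\<forall>w\<in>S. f w = Min ((\<lambda>v. v \<bullet> w) ` V)))"

lemma Min_add_Min_product:
  fixes f g :: "_ \<Rightarrow> 'a::linordered_ab_semigroup_add"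
  assumes "finite A" "A \<noteq> {}" "finite B" "B \<noteq> {}"
  shows "Min (f ` A) + Min (g ` B) = Min ((\<lambda>(a, b). f a + g b) ` (A \<times> B))"
proof (rule antisym)
  obtain a where a: "a \<in> A" "Min (f ` A) = f a" using obtains_MIN[OF assms(1,2)] .
  obtain b where b: "b \<in> B" "Min (g ` B) = g b" using obtains_MIN[OF assms(3,4)] .
  show "Min ((\<lambda>(a, b). f a + g b) ` (A \<times> B)) \<le> Min (f ` A) + Min (g ` B)"
    using a b assms by (intro Min_le) auto
  show "Min (f ` A) + Min (g ` B) \<le> Min ((\<lambda>(a, b). f a + g b) ` (A \<times> B))"
    using assms by (auto intro: add_mono)
qed

lemma min_of_linear_on_add:
  assumes "min_of_linear_on S f" "min_of_linear_on S g"
  shows "min_of_linear_on S (\<lambda>w. f w + g w)"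
proof -
  obtain A where A: "finite A" "A \<noteq> {}" "\<forall>w\<in>S. f w = Min ((\<lambda>v. v \<bullet> w) ` A)"
    using assms(1) unfolding min_of_linear_on_def by blast
  obtain B where B: "finite B" "B \<noteq> {}" "\<forall>w\<in>S. g w = Min ((\<lambda>v. v \<bullet> w) ` B)"
    using assms(2) unfolding min_of_linear_on_def by blast
  have "Min ((\<lambda>v. v \<bullet> w) ` A) + Min ((\<lambda>v. v \<bullet> w) ` B)
      = Min ((\<lambda>v. v \<bullet> w) ` (\<lambda>(a, b). a + b) ` (A \<times> B))" for w
    unfolding Min_add_Min_product[OF A(1,2) B(1,2)] image_image
    by (simp add: case_prod_beta inner_add_left)
  then show ?thesis
    unfolding min_of_linear_on_def using A B
    by (intro exI[of _ "(\<lambda>(a, b). a + b) ` (A \<times> B)"]) auto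
qed

lemma min_of_linear_on_sum:
  assumes "finite I" "\<And>i. i \<in> I \<Longrightarrow> min_of_linear_on S (f i)"
  shows "min_of_linear_on S (\<lambda>w. \<Sum>i\<in>I. f i w)"
  using assms
proof (induction I rule: finite_induct)
  case empty
  show ?case unfolding min_of_linear_on_def by (intro exI[of _ "{0}"]) auto
next
  case (insert i I)
  then show ?case by (simp add: min_of_linear_on_add)
qed

lemma min_of_linear_on_min:
  assumes "min_of_linear_on S f" "min_of_linear_on S g"
  shows "min_of_linear_on S (\<lambda>w. min (f w) (g w))"
proof -
  obtain A where A: "finite A" "A \<noteq> {}" "\<forall>w\<in>S. f w = Min ((\<lambda>v. v \<bullet> w) ` A)"
    using assms(1) unfolding min_of_linear_on_def by blast
  obtain B where B: "finite B" "B \<noteq> {}" "\<forall>w\<in>S. g w = Min ((\<lambda>v. v \<bullet> w) ` B)"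
    using assms(2) unfolding min_of_linear_on_def by blast
  show ?thesis
    unfolding min_of_linear_on_def using A B
    by (intro exI[of _ "A \<union> B"]) (auto simp: image_Un Min_Un)
qed

lemma min_of_linear_on_subset:
  "min_of_linear_on T f \<Longrightarrow> S \<subseteq> T \<Longrightarrow> min_of_linear_on S f"
  unfolding min_of_linear_on_def by blast

lemma min_of_linear_on_gcost: "min_of_linear_on UNIV (gcost Q)"
  unfolding min_of_linear_on_def gcost_def
  by (intro exI[of _ "range (\<lambda>j. \<chi> i. Q i j)"])
     (simp add: image_image inner_vec_def mult.commute)

lemma min_of_linear_on_const: "min_of_linear_on prob_simplex (\<lambda>_. c)"
  unfolding min_of_linear_on_def
  by (intro exI[of _ "{\<chi> i. c}"])
     (simp add: prob_simplex_def inner_vec_def flip: sum_distrib_left)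

lemma min_of_linear_on_perspective:
  fixes d :: "real ^ 'c::finite"
  assumes d_nonneg: "\<And>i. 0 \<le> d $ i" and J: "min_of_linear_on prob_simplex J"
  shows "min_of_linear_on prob_simplex
           (\<lambda>w. if d \<bullet> w = 0 then 0 else (d \<bullet> w) * J (\<chi> i. d $ i * w $ i / (d \<bullet> w)))"
proof -
  obtain V where V: "finite V" "V \<noteq> {}"
    and J_eq: "\<And>p. p \<in> prob_simplex \<Longrightarrow> J p = Min ((\<lambda>v. v \<bullet> p) ` V)"
    using J unfolding min_of_linear_on_def by blast
  define scale where "scale v = (\<chi> i. v $ i * d $ i)" for v :: "real ^ 'c"
  have "(if d \<bullet> w = 0 then 0 else (d \<bullet> w) * J (\<chi> i. d $ i * w $ i / (d \<bullet> w)))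
          = Min ((\<lambda>v. v \<bullet> w) ` scale ` V)"
    if w: "w \<in> prob_simplex" for w
  proof -
    have dw_nonneg: "\<And>i. 0 \<le> d $ i * w $ i"
      using d_nonneg w by (simp add: prob_simplex_def)
    have dw: "d \<bullet> w = (\<Sum>i\<in>UNIV. d $ i * w $ i)"
      by (simp add: inner_vec_def)
    have scale_inner: "scale v \<bullet> w = (\<Sum>i\<in>UNIV. v $ i * (d $ i * w $ i))" for v
      by (simp add: scale_def inner_vec_def mult.assoc)
    show ?thesis
    proof (cases "d \<bullet> w = 0")
      case True
      then have dw_zero: "d $ i * w $ i = 0" for i
        using dw dw_nonneg sum_nonneg_eq_0_iff[of UNIV "\<lambda>i. d $ i * w $ i"] by auto
      have "scale v \<bullet> w = 0" for v
        by (simp only: scale_inner dw_zero mult_zero_right sum.neutral_const)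
      then have "(\<lambda>v. v \<bullet> w) ` scale ` V = {0}"
        using V by (simp add: image_image image_constant_conv)
      then show ?thesis using True by simp
    next
      case False
      define s where "s = d \<bullet> w"
      have "0 \<le> s" unfolding s_def dw by (intro sum_nonneg dw_nonneg)
      with False have "0 < s" by (simp add: s_def)
      define p where "p = (\<chi> i. d $ i * w $ i / s)"
      have "p \<in> prob_simplex"
        using \<open>0 < s\<close> dw_nonneg
        by (simp add: prob_simplex_def p_def s_def dw flip: sum_divide_distrib)
      then have "s * J p = s * Min ((\<lambda>v. v \<bullet> p) ` V)" by (simp add: J_eq)
      also have "\<dots> = Min ((*) s ` (\<lambda>v. v \<bullet> p) ` V)"
        using \<open>0 < s\<close> V by (intro mono_Min_commute) (auto simp: mono_def)
      also have "(*) s ` (\<lambda>v. v \<bullet> p) ` V = (\<lambda>v. v \<bullet> w) ` scale ` V"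
        unfolding image_image scale_inner using \<open>0 < s\<close>
        by (simp add: p_def inner_vec_def sum_distrib_left)
      finally show ?thesis using False by (simp add: s_def p_def)
    qed
  qed
  then show ?thesis
    unfolding min_of_linear_on_def using V by (intro exI[of _ "scale ` V"]) auto
qed

lemma min_of_linear_on_Aop:
  assumes "\<And>f. min_of_linear_on prob_simplex (J (fs @ [f]))"
  shows "min_of_linear_on prob_simplex (Aop P e J fs)"
  unfolding Aop_def[abs_def] Let_def
  by (intro min_of_linear_on_add min_of_linear_on_const min_of_linear_on_sum
        min_of_linear_on_perspective assms)
     (simp_all add: Delta_def)

lemma min_of_linear_on_Jrem: "min_of_linear_on prob_simplex (Jrem P e Q m fs)"
proof (induction m arbitrary: fs)
  case 0
  show ?case using min_of_linear_on_subset[OF min_of_linear_on_gcost] by simp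
next
  case (Suc m)
  show ?case
    using min_of_linear_on_min[OF min_of_linear_on_subset[OF min_of_linear_on_gcost]
        min_of_linear_on_Aop[OF Suc]]
    by simp
qed

lemma polyhedron_prob_simplex: "polyhedron (prob_simplex :: (real ^ 'c::finite) set)"
proof -
  have "(prob_simplex :: (real ^ 'c) set) =
      \<Inter> (range (\<lambda>i. {w. axis i 1 \<bullet> w \<ge> 0})) \<inter> {w. (\<chi> i. 1) \<bullet> w = 1}"
    by (auto simp: prob_simplex_def inner_axis' inner_vec_def[of "\<chi> i. 1"])
  also have "polyhedron \<dots>"
    by (intro polyhedron_Int polyhedron_Inter polyhedron_hyperplane)
       (auto simp: polyhedron_halfspace_ge)
  finally show ?thesis .
qed

lemma min_of_linear_on_imp_concave:
  assumes "convex S" "min_of_linear_on S f"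
  shows "concave_on S f"
proof -
  obtain V where V: "finite V" "V \<noteq> {}" "\<forall>w\<in>S. f w = Min ((\<lambda>v. v \<bullet> w) ` V)"
    using assms(2) unfolding min_of_linear_on_def by blast
  show ?thesis unfolding concave_on_iff
  proof (intro conjI assms(1) ballI allI impI)
    fix x y and u t :: real
    assume xy: "x \<in> S" "y \<in> S" and ut: "0 \<le> u" "0 \<le> t" "u + t = 1"
    let ?z = "u *\<^sub>R x + t *\<^sub>R y"
    have "?z \<in> S" using assms(1) xy ut unfolding convex_def by blast
    obtain v where v: "v \<in> V" "Min ((\<lambda>v. v \<bullet> ?z) ` V) = v \<bullet> ?z"
      using obtains_MIN[OF V(1,2)] by blast
    have "f x \<le> v \<bullet> x" "f y \<le> v \<bullet> y" using V xy v(1) by auto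
    then have "u * f x + t * f y \<le> u * (v \<bullet> x) + t * (v \<bullet> y)"
      using ut by (intro add_mono mult_left_mono) auto
    also have "\<dots> = f ?z" using V \<open>?z \<in> S\<close> v by (simp add: inner_add_right)
    finally show "u * f x + t * f y \<le> f ?z" .
  qed
qed

lemma continuous_on_Min_inner:
  assumes "finite V" "V \<noteq> {}"
  shows "continuous_on S (\<lambda>w. Min ((\<lambda>v. v \<bullet> w) ` V))"
  using assms
  by (induction V rule: finite_ne_induct) (simp_all add: Min_insert continuous_intros)

lemma min_of_linear_on_imp_continuous:
  assumes "min_of_linear_on S f"
  shows "continuous_on S f"
proof -
  obtain V where V: "finite V" "V \<noteq> {}" "\<forall>w\<in>S. f w = Min ((\<lambda>v. v \<bullet> w) ` V)"
    using assms unfolding min_of_linear_on_def by blast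
  show ?thesis
    using continuous_on_cong[of S S f] continuous_on_Min_inner[OF V(1,2)] V(3) by simp
qed

lemma min_of_linear_on_imp_piecewise_linear:
  assumes "polyhedron S" "min_of_linear_on S f"
  shows "piecewise_linear_on S f"
proof -
  obtain V where V: "finite V" "V \<noteq> {}" "\<forall>w\<in>S. f w = Min ((\<lambda>v. v \<bullet> w) ` V)"
    using assms(2) unfolding min_of_linear_on_def by blast
  define piece where "piece v = S \<inter> (\<Inter>u\<in>V. {w. (v - u) \<bullet> w \<le> 0})" for v
  have f_piece: "f w = v \<bullet> w" if "v \<in> V" "w \<in> piece v" for v w
    using that V by (intro trans[OF bspec[OF V(3)] Min_eqI]) (auto simp: piece_def inner_diff_left)
  have "S \<subseteq> \<Union> (piece ` V)"
  proof
    fix w assume "w \<in> S"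
    obtain v where v: "v \<in> V" "Min ((\<lambda>v. v \<bullet> w) ` V) = v \<bullet> w"
      using obtains_MIN[OF V(1,2)] by blast
    then have "v \<bullet> w \<le> u \<bullet> w" if "u \<in> V" for u
      using V(1) that by (metis Min_le finite_imageI image_eqI)
    with \<open>w \<in> S\<close> have "w \<in> piece v" by (simp add: piece_def inner_diff_left)
    with \<open>v \<in> V\<close> show "w \<in> \<Union> (piece ` V)" by blast
  qed
  then have "\<Union> (piece ` V) = S" by (auto simp: piece_def)
  moreover have "polyhedron (piece v)" for v
    unfolding piece_def using V(1)
    by (intro polyhedron_Int assms(1) polyhedron_Inter) (auto simp: polyhedron_halfspace_le)
  moreover have "\<exists>a b. \<forall>w\<in>piece v. f w = a \<bullet> w + b" if "v \<in> V" for v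
    using f_piece[OF that] by (intro exI[of _ v] exI[of _ 0]) simp
  ultimately show ?thesis
    unfolding piecewise_linear_on_def using V(1) by (intro exI[of _ "piece ` V"]) blast
qed

theorem lemma2:
  fixes P :: "('c::finite \<times> 'v::finite list) pmf"
    and Q :: "'c \<Rightarrow> 'c \<Rightarrow> real"
    and e :: "nat \<Rightarrow> real"
    and K k :: nat
    and fs :: "'v list"
  assumes featlen: "\<forall>(c, x) \<in> set_pmf P. length x = K"
    and epos: "\<forall>j\<in>{1..K}. e j > 0"
    and Qnn: "\<forall>i j. Q i j \<ge> 0"
    and kK: "k < K"
    and fslen: "length fs = k"
  shows "concave_on prob_simplex (Ak P e Q K fs)
       \<and> continuous_on prob_simplex (Ak P e Q K fs)
       \<and> piecewise_linear_on prob_simplex (Ak P e Q K fs)"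
proof -
  have A: "min_of_linear_on prob_simplex (Ak P e Q K fs)"
    unfolding Ak_def[abs_def] by (intro min_of_linear_on_Aop min_of_linear_on_Jrem)
  have S: "polyhedron (prob_simplex :: (real ^ 'c) set)"
    by (rule polyhedron_prob_simplex)
  show ?thesis
    using min_of_linear_on_imp_concave[OF polyhedron_imp_convex[OF S] A]
      min_of_linear_on_imp_continuous[OF A] min_of_linear_on_imp_piecewise_linear[OF S A]
    by blast
qed

end
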